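(* Consider the Gaussian broadcast model on $P=\mathcal{HS}_2$ with $\alpha_2=1/2$. Let $M,t$ be positive integers with $M\ge2^5$ and $t\ge2^{11}M^3$. Then for all integers $i,j$ with $|i-j|\le2M$, $$\sqrt t\ge\operatorname{Var}\big(X_{(i,t-i)}\big)\ge\operatorname{Cov}\big(X_{(i,t-i)},X_{(j,t-j)}\big)\ge\frac{\sqrt t}{50}.$$
   Context: Infinite model: $\mathcal{HS}_{d+1}=\{(x_1,\dots,x_{d+1})\in\mathbb Z^{d+1}:x_1+\dots+x_{d+1}\ge0\}$ with $u\le v$ iff $v-u\in\mathbb Z_{\ge0}^{d+1}$; layer $L_t$ = points with coordinate sum $t$; each point $v$ of rank $\ge1$ covers exactly the $d+1$ points $v-e_i$ (the set $\mathfrak p(v)$). Gaussian broadcast model: $X_0\sim\mathcal N(0,1)$; independently, i.i.d. $W_{u\to v}\sim\mathcal N(0,1)$ for covering pairs $u\lessdot v$; $X_v=X_0$ for every $v\in L_0$; and $X_v=\alpha_{d+1}\sum_{u\in\mathfrak p(v)}(X_u+W_{u\to v})$ for $v$ of rank $\ge1$. Here $d=1$. *)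

theory Defs
  imports "HOL-Probability.Probability"
begin

definition covariance :: "'a measure \<Rightarrow> ('a \<Rightarrow> real) \<Rightarrow> ('a \<Rightarrow> real) \<Rightarrow> real" where
  "covariance M X Y =
     (\<integral>\<omega>. (X \<omega> - (\<integral>\<eta>. X \<eta> \<partial>M)) * (Y \<omega> - (\<integral>\<eta>. Y \<eta> \<partial>M)) \<partial>M)"

text \<open>Points of HS_2 are pairs of integers (a,b) with a+b \<ge> 0; the rank is a+b.
  The noise variables are indexed by
    None                 : the root variable X_0,
    Some ((a,b), True)   : W on the edge (a-1,b) \<lessdot> (a,b),
    Some ((a,b), False)  : W on the edge (a,b-1) \<lessdot> (a,b),
  for (a,b) of rank \<ge> 1.\<close>
definition HS2_noise_index :: "((int \<times> int) \<times> bool) option set" where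
  "HS2_noise_index = {None} \<union> {Some ((a,b),c) | a b c. a + b \<ge> 1}"

definition gaussian_broadcast_HS2 ::
  "'s measure \<Rightarrow> (((int \<times> int) \<times> bool) option \<Rightarrow> 's \<Rightarrow> real) \<Rightarrow> (int \<times> int \<Rightarrow> 's \<Rightarrow> real) \<Rightarrow> bool"
where
  "gaussian_broadcast_HS2 M Z X \<longleftrightarrow>
     prob_space M \<and>
     prob_space.indep_vars M (\<lambda>_. borel) Z HS2_noise_index \<and>
     (\<forall>i\<in>HS2_noise_index. distributed M lborel (Z i) std_normal_density) \<and>
     (\<forall>a b. a + b = 0 \<longrightarrow> X (a,b) = Z None) \<and>
     (\<forall>a b. a + b \<ge> 1 \<longrightarrow>
        (\<forall>\<omega>. X (a,b) \<omega> = (1/2) *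
            ((X (a-1,b) \<omega> + Z (Some ((a,b),True)) \<omega>) +
             (X (a,b-1) \<omega> + Z (Some ((a,b),False)) \<omega>))))"

end

theory Submission
  imports Defs
begin

text \<open>
  On a layer the covariance of the variables at \<open>(a, b)\<close> and \<open>(a', b')\<close> depends only on
  \<open>d = a - a'\<close>. Expanding both variables by the recursion shows that it satisfies
  \<open>c(t+1, d) = (c(t, d-1) + 2 c(t, d) + c(t, d+1)) / 4 + [d = 0] / 2\<close> with \<open>c(0, d) = 1\<close>,
  hence \<open>c(t, d) = 1 + 1/2 \<Sum>n<t. C(2n, n+d) / 4^n\<close>, a sum of transition probabilities of the
  lazy random walk with steps \<open>-1, 0, 0, +1\<close>. The central probabilities \<open>C(2n, n) / 4^n\<close> lie
  between \<open>1 / (2 sqrt n)\<close> and \<open>1 / sqrt (2n+1)\<close>, which bounds the variance \<open>c(t, 0)\<close> by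
  \<open>sqrt t\<close>. For \<open>|d| \<le> D\<close> and \<open>n \<ge> 4 D^2\<close> the probability \<open>C(2n, n+d) / 4^n\<close> is at least
  half the central one, and the at least \<open>t/2\<close> such terms give \<open>c(t, d) \<ge> sqrt t / 16\<close>.
\<close>

section \<open>Binomial coefficients with an integer lower index\<close>

definition binom_int :: "nat \<Rightarrow> int \<Rightarrow> real" where
  "binom_int n k = (if k < 0 then 0 else real (n choose nat k))"

lemma binom_int_0: "binom_int 0 k = (if k = 0 then 1 else 0)"
  by (auto simp: binom_int_def)

lemma binom_int_nonneg: "binom_int n k \<ge> 0"
  by (simp add: binom_int_def)

lemma binom_int_Suc: "binom_int (Suc n) (k + 1) = binom_int n k + binom_int n (k + 1)"
proof (cases "k \<ge> 0")
  case True
  then have "nat (k + 1) = Suc (nat k)" by simp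
  with True show ?thesis by (simp add: binom_int_def)
next
  case False
  then show ?thesis by (cases "k = -1") (auto simp: binom_int_def)
qed

lemma binom_int_double_Suc:
  "binom_int (2 * Suc n) (int (Suc n) + d) =
     binom_int (2 * n) (int n + (d - 1)) + 2 * binom_int (2 * n) (int n + d)
       + binom_int (2 * n) (int n + (d + 1))"
proof -
  have "binom_int (2 * Suc n) (int (Suc n) + d) = binom_int (Suc (Suc (2 * n))) ((int n + d) + 1)"
    by (simp add: algebra_simps)
  also have "\<dots> = binom_int (Suc (2 * n)) (int n + d) + binom_int (Suc (2 * n)) ((int n + d) + 1)"
    by (rule binom_int_Suc)
  also have "binom_int (Suc (2 * n)) (int n + d) =
      binom_int (2 * n) (int n + (d - 1)) + binom_int (2 * n) (int n + d)"
    using binom_int_Suc[of "2 * n" "int n + (d - 1)"] by (simp add: algebra_simps)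
  also have "binom_int (Suc (2 * n)) ((int n + d) + 1) =
      binom_int (2 * n) (int n + d) + binom_int (2 * n) (int n + (d + 1))"
    using binom_int_Suc[of "2 * n" "int n + d"] by (simp add: algebra_simps)
  finally show ?thesis by simp
qed

lemma binom_int_central: "binom_int (2 * n) (int n) = real ((2 * n) choose n)"
  by (simp add: binom_int_def)

lemma binom_int_le_central: "binom_int (2 * n) k \<le> real ((2 * n) choose n)"
  by (auto simp: binom_int_def binomial_maximum')

lemma binom_int_abs: "binom_int (2 * n) (int n + d) = binom_int (2 * n) (int n + \<bar>d\<bar>)"
proof (cases "d \<ge> 0")
  case False
  define e where "e = nat (- d)"
  have d: "d = - int e" using False e_def by simp
  have abs_side: "binom_int (2 * n) (int n + \<bar>d\<bar>) = real ((2 * n) choose (n + e))"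
    using d by (simp add: binom_int_def) (metis nat_int of_nat_add)
  show ?thesis
  proof (cases "e \<le> n")
    case True
    then have "(2 * n) choose (n - e) = (2 * n) choose (n + e)"
      using binomial_symmetric[of "n - e" "2 * n"] by (simp add: numeral_2_eq_2)
    moreover have "binom_int (2 * n) (int n + d) = real ((2 * n) choose (n - e))"
      using True d by (simp add: binom_int_def) (metis nat_int of_nat_diff)
    ultimately show ?thesis using abs_side by simp
  next
    case False
    with d abs_side show ?thesis by (simp add: binom_int_def binomial_eq_0)
  qed
qed simp

lemma Suc_times_binomial_comp: "Suc k * (m choose Suc k) = (m - k) * (m choose k)"
proof (cases m)
  case (Suc m')
  then show ?thesis using Suc_times_binomial[of k m'] binomial_absorb_comp[of m k] by simp
qed simp

lemma binomial_near_central_ge: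
  fixes e D n :: nat
  assumes "e \<le> D" "2 * D \<le> n"
  shows "real ((2 * n) choose (n + e)) \<ge> real ((2 * n) choose n) * (1 - 2 * real D / real n) ^ e"
  using assms(1)
proof (induction e)
  case (Suc e)
  define x where "x = 2 * real D / real n"
  have x_le_1: "x \<le> 1"
    using assms by (cases "n = 0") (simp_all add: x_def field_simps)
  have ratio: "real ((2 * n) choose (n + Suc e)) =
      real ((2 * n) choose (n + e)) * ((real n - real e) / (real n + real e + 1))"
  proof -
    have "real (Suc (n + e)) * real ((2 * n) choose Suc (n + e)) =
        real (n - e) * real ((2 * n) choose (n + e))"
      using Suc_times_binomial_comp[of "n + e" "2 * n"] by (metis diff_add_inverse2 diff_diff_left mult_2 of_nat_mult)
    moreover have "real (n - e) = real n - real e" using Suc assms by simp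
    ultimately show ?thesis by (simp add: field_simps)
  qed
  have factor: "1 - x \<le> (real n - real e) / (real n + real e + 1)"
  proof -
    have "real n * (2 * real e + 1) \<le> real n * (2 * real D)"
      using Suc by (intro mult_left_mono) auto
    moreover have "(real n - 2 * real D) * (real n + real e + 1) =
        (real n - real e) * real n + (real n * (2 * real e + 1) - real n * (2 * real D))
          - 2 * real D * (real e + 1)"
      by (simp add: algebra_simps)
    moreover have "0 \<le> 2 * real D * (real e + 1)" by simp
    ultimately have "(real n - 2 * real D) * (real n + real e + 1) \<le> (real n - real e) * real n"
      by linarith
    moreover have "n > 0" using Suc assms by simp
    ultimately show ?thesis by (simp add: x_def field_simps)
  qed
  have "real ((2 * n) choose n) * (1 - x) ^ Suc e = real ((2 * n) choose n) * (1 - x) ^ e * (1 - x)"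
    by simp
  also have "\<dots> \<le> real ((2 * n) choose (n + e)) * ((real n - real e) / (real n + real e + 1))"
    using Suc x_le_1 factor by (intro mult_mono) (auto simp: x_def)
  also have "\<dots> = real ((2 * n) choose (n + Suc e))"
    by (rule ratio[symmetric])
  finally show ?case by (simp only: x_def)
qed simp

lemma binom_int_near_central_ge:
  fixes D n :: nat
  assumes "\<bar>d\<bar> \<le> int D" "4 * D^2 \<le> n"
  shows "binom_int (2 * n) (int n + d) \<ge> real ((2 * n) choose n) / 2"
proof (cases "D = 0")
  case True
  with assms show ?thesis by (simp add: binom_int_central)
next
  case False
  define e where "e = nat \<bar>d\<bar>"
  have e_le: "e \<le> D" using assms(1) e_def by simp
  have "D \<le> D * D" using False by simp
  then have n_ge: "2 * D \<le> n" using assms(2) unfolding power2_eq_square by linarith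
  then have n_pos: "real n > 0" using False by simp
  have "binom_int (2 * n) (int n + d) = real ((2 * n) choose (n + e))"
    by (subst binom_int_abs) (simp add: e_def binom_int_def nat_add_distrib)
  also have "\<dots> \<ge> real ((2 * n) choose n) * (1 - 2 * real D / real n) ^ e"
    by (rule binomial_near_central_ge[OF e_le n_ge])
  finally have bound: "binom_int (2 * n) (int n + d) \<ge> real ((2 * n) choose n) * (1 - 2 * real D / real n) ^ e" .
  have "2 * real D / real n \<le> 1"
    using n_ge n_pos by (simp add: field_simps)
  then have "1 - real e * (2 * real D / real n) \<le> (1 - 2 * real D / real n) ^ e"
    using Bernoulli_inequality[of "- (2 * real D / real n)" e] by simp
  moreover have "real e * (2 * real D / real n) \<le> 1 / 2"
  proof -
    have "real e * real D \<le> real D * real D" using e_le by (intro mult_right_mono) auto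
    moreover have "4 * real D ^ 2 \<le> real n"
      using assms(2) by (metis of_nat_le_iff of_nat_mult of_nat_numeral of_nat_power)
    ultimately show ?thesis using n_pos by (simp add: power2_eq_square field_simps)
  qed
  ultimately have "(1 - 2 * real D / real n) ^ e \<ge> 1 / 2" by linarith
  then have "real ((2 * n) choose n) * (1 / 2) \<le> real ((2 * n) choose n) * (1 - 2 * real D / real n) ^ e"
    by (rule mult_left_mono) simp
  with bound show ?thesis by linarith
qed

section \<open>Central binomial probabilities\<close>

definition central_binom_prob :: "nat \<Rightarrow> real" where
  "central_binom_prob n = real ((2 * n) choose n) / 4 ^ n"

lemma central_binom_prob_nonneg: "central_binom_prob n \<ge> 0"
  by (simp add: central_binom_prob_def)

lemma Suc_times_central_binomial:
  "Suc n * ((2 * Suc n) choose Suc n) = 2 * (2 * n + 1) * ((2 * n) choose n)"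
proof -
  define A where "A = Suc (Suc (2 * n)) choose Suc n"
  define B where "B = Suc (2 * n) choose n"
  define C where "C = (2 * n) choose n"
  have A_eq: "Suc n * A = Suc (Suc (2 * n)) * B"
    unfolding A_def B_def by (rule Suc_times_binomial)
  have C_eq: "Suc (2 * n) * C = B * Suc n"
    using Suc_times_binomial_eq[of "2 * n" n] binomial_symmetric[of "Suc n" "Suc (2 * n)"]
    by (simp add: B_def C_def)
  have "Suc n * (Suc n * A) = 2 * Suc n * (B * Suc n)"
    using A_eq by (simp add: algebra_simps)
  also have "\<dots> = 2 * Suc n * (Suc (2 * n) * C)"
    using C_eq by simp
  also have "\<dots> = Suc n * (2 * (2 * n + 1) * C)"
    by (simp add: algebra_simps)
  finally have "Suc n * A = 2 * (2 * n + 1) * C" by (simp only: mult_cancel1) simp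
  then show ?thesis by (simp add: A_def C_def)
qed

lemma central_binom_prob_Suc:
  "central_binom_prob (Suc n) = central_binom_prob n * (2 * real n + 1) / (2 * real n + 2)"
proof -
  have "real (Suc n * ((2 * Suc n) choose Suc n)) = real (2 * (2 * n + 1) * ((2 * n) choose n))"
    using Suc_times_central_binomial[of n] by (simp only:)
  then have "(real n + 1) * real ((2 * Suc n) choose Suc n) =
      2 * (2 * real n + 1) * real ((2 * n) choose n)"
    by (simp only: of_nat_mult of_nat_Suc of_nat_add of_nat_numeral of_nat_1) (simp add: algebra_simps)
  then have "real ((2 * Suc n) choose Suc n) =
      2 * (2 * real n + 1) * real ((2 * n) choose n) / (real n + 1)"
    by (simp add: eq_divide_eq algebra_simps)
  then show ?thesis
    by (simp add: central_binom_prob_def divide_simps) (simp add: algebra_simps)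
qed

lemma central_binom_prob_sq_le: "central_binom_prob n ^ 2 * (2 * real n + 1) \<le> 1"
proof (induction n)
  case 0
  then show ?case by (simp add: central_binom_prob_def)
next
  case (Suc n)
  have "central_binom_prob (Suc n) ^ 2 * (2 * real (Suc n) + 1) =
      (central_binom_prob n ^ 2 * (2 * real n + 1)) *
      ((2 * real n + 1) * (2 * real n + 3) / (2 * real n + 2) ^ 2)"
    by (simp add: central_binom_prob_Suc field_simps power2_eq_square)
  also have "\<dots> \<le> 1 * 1"
  proof (rule mult_mono)
    have "0 < (2 * real n + 2) ^ 2" by simp
    then show "(2 * real n + 1) * (2 * real n + 3) / (2 * real n + 2) ^ 2 \<le> 1"
      by (simp add: pos_divide_le_eq power2_eq_square algebra_simps)
  qed (use Suc in simp_all)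
  finally show ?case by simp
qed

lemma central_binom_prob_sq_ge: "1 \<le> n \<Longrightarrow> 1 \<le> central_binom_prob n ^ 2 * (4 * real n)"
proof (induction n rule: dec_induct)
  case base
  then show ?case by (simp add: central_binom_prob_def power2_eq_square)
next
  case (step m)
  then have m_pos: "real m > 0" by simp
  have "central_binom_prob (Suc m) ^ 2 * (4 * real (Suc m)) =
      (central_binom_prob m ^ 2 * (4 * real m)) * ((2 * real m + 1) ^ 2 / (4 * real m * (real m + 1)))"
    using m_pos unfolding central_binom_prob_Suc power2_eq_square
    by (simp add: divide_simps) (simp add: algebra_simps)
  also have "\<dots> \<ge> 1 * 1"
  proof (rule mult_mono)
    show "1 \<le> (2 * real m + 1) ^ 2 / (4 * real m * (real m + 1))"
      using m_pos by (subst le_divide_eq_1_pos) (simp_all add: power2_eq_square algebra_simps add_pos_pos)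
  qed (use step in simp_all)
  finally show ?case by simp
qed

lemma central_binom_prob_le: "central_binom_prob n \<le> 1 / sqrt (2 * real n + 1)"
proof -
  have "central_binom_prob n ^ 2 \<le> 1 / (2 * real n + 1)"
    using central_binom_prob_sq_le[of n] by (simp add: field_simps)
  then have "central_binom_prob n \<le> sqrt (1 / (2 * real n + 1))" by (rule real_le_rsqrt)
  then show ?thesis by (simp add: real_sqrt_divide)
qed

lemma central_binom_prob_ge: "1 \<le> n \<Longrightarrow> 1 / (2 * sqrt (real n)) \<le> central_binom_prob n"
proof -
  assume n: "1 \<le> n"
  have "1 / (4 * real n) \<le> central_binom_prob n ^ 2"
    using central_binom_prob_sq_ge[OF n] n by (simp add: field_simps)
  then have "sqrt (1 / (4 * real n)) \<le> central_binom_prob n"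
    using central_binom_prob_nonneg[of n] by (simp add: real_le_lsqrt real_sqrt_le_iff)
  then show ?thesis by (simp add: real_sqrt_divide real_sqrt_mult)
qed

lemma sqrt_sq_minus_2_add_inverse_le:
  fixes y :: real
  assumes "1 \<le> y"
  shows "sqrt (y^2 - 2) + 1 / y \<le> y"
proof -
  have "1 * 1 \<le> y * y" using assms by (intro mult_mono) auto
  then have y_sq: "1 \<le> y * y" by simp
  have "sqrt (y^2 - 2) \<le> y - 1 / y"
  proof (rule real_le_lsqrt)
    show "0 \<le> y - 1 / y" using assms y_sq by (simp add: field_simps)
    show "y^2 - 2 \<le> (y - 1 / y)^2" using assms y_sq by (simp add: power2_eq_square field_simps)
  qed
  then show ?thesis by simp
qed

lemma sum_inverse_sqrt_odd_le:
  "1 \<le> t \<Longrightarrow> (\<Sum>n<t. 1 / sqrt (2 * real n + 1)) \<le> sqrt (2 * real t - 1)"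
proof (induction t rule: dec_induct)
  case (step t)
  have y: "sqrt (2 * real t + 1) ^ 2 - 2 = 2 * real t - 1" by simp
  have "(\<Sum>n<Suc t. 1 / sqrt (2 * real n + 1)) \<le> sqrt (2 * real t - 1) + 1 / sqrt (2 * real t + 1)"
    using step by simp
  also have "\<dots> \<le> sqrt (2 * real t + 1)"
    using sqrt_sq_minus_2_add_inverse_le[of "sqrt (2 * real t + 1)"] by (simp only: y) simp
  finally show ?case by (simp add: algebra_simps)
qed simp

section \<open>The covariance kernel\<close>

definition broadcast_cov :: "nat \<Rightarrow> int \<Rightarrow> real" where
  "broadcast_cov t d = 1 + (1/2) * (\<Sum>n<t. binom_int (2 * n) (int n + d) / 4 ^ n)"

lemma broadcast_cov_0: "broadcast_cov 0 d = 1"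
  by (simp add: broadcast_cov_def)

lemma broadcast_cov_Suc:
  "broadcast_cov (Suc t) d =
     (broadcast_cov t (d - 1) + 2 * broadcast_cov t d + broadcast_cov t (d + 1)) / 4
       + (if d = 0 then 1/2 else 0)"
proof -
  let ?S = "\<lambda>d. \<Sum>n<t. binom_int (2 * n) (int n + d) / 4 ^ n"
  let ?S' = "\<lambda>t. \<Sum>n<t. binom_int (2 * n) (int n + d) / 4 ^ n"
  have "?S' (Suc t) =
      (\<Sum>n<t. binom_int (2 * Suc n) (int (Suc n) + d) / 4 ^ Suc n) + binom_int 0 d"
    by (subst sum.lessThan_Suc_shift) simp
  also have "(\<Sum>n<t. binom_int (2 * Suc n) (int (Suc n) + d) / 4 ^ Suc n) =
      (\<Sum>n<t. (binom_int (2 * n) (int n + (d - 1)) / 4 ^ n + 2 * (binom_int (2 * n) (int n + d) / 4 ^ n)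
        + binom_int (2 * n) (int n + (d + 1)) / 4 ^ n) / 4)"
    by (intro sum.cong refl, subst binom_int_double_Suc) (simp add: field_simps)
  also have "\<dots> = (?S (d - 1) + 2 * ?S d + ?S (d + 1)) / 4"
    by (simp only: sum_divide_distrib[symmetric] sum.distrib sum_distrib_left[symmetric])
  finally have "?S' (Suc t) = (?S (d - 1) + 2 * ?S d + ?S (d + 1)) / 4 + binom_int 0 d" .
  then show ?thesis
    by (simp only: broadcast_cov_def) (simp add: binom_int_0 field_simps)
qed

lemma broadcast_cov_le_diag: "broadcast_cov t d \<le> broadcast_cov t 0"
  unfolding broadcast_cov_def
  by (simp add: binom_int_central binom_int_le_central sum_mono divide_right_mono)

lemma broadcast_cov_diag_le: assumes "16 \<le> t" shows "broadcast_cov t 0 \<le> sqrt (real t)"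
proof -
  have "(\<Sum>n<t. binom_int (2 * n) (int n + 0) / 4 ^ n) = (\<Sum>n<t. central_binom_prob n)"
    by (simp add: binom_int_central central_binom_prob_def)
  also have "\<dots> \<le> (\<Sum>n<t. 1 / sqrt (2 * real n + 1))"
    by (intro sum_mono central_binom_prob_le)
  also have "\<dots> \<le> sqrt (2 * real t - 1)"
    using sum_inverse_sqrt_odd_le[of t] assms by simp
  also have "\<dots> \<le> sqrt (2 * real t)"
    by simp
  also have "\<dots> = sqrt 2 * sqrt (real t)"
    by (simp add: real_sqrt_mult)
  also have "\<dots> \<le> 3/2 * sqrt (real t)"
  proof (rule mult_right_mono)
    have "sqrt 2 \<le> sqrt ((3/2)^2)" by (simp add: power2_eq_square)
    then show "sqrt 2 \<le> 3/2" by simp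
  qed simp
  finally have "(\<Sum>n<t. binom_int (2 * n) (int n + 0) / 4 ^ n) \<le> 3/2 * sqrt (real t)" .
  moreover have "4 \<le> sqrt (real t)"
    using real_sqrt_le_mono[of "4^2" "real t"] assms by simp
  ultimately show ?thesis unfolding broadcast_cov_def by simp
qed

lemma broadcast_cov_ge:
  fixes D :: nat
  assumes "\<bar>d\<bar> \<le> int D" "1 \<le> D" "8 * D^2 \<le> t"
  shows "sqrt (real t) / 16 \<le> broadcast_cov t d"
proof -
  define N where "N = 4 * D^2"
  have "(\<Sum>n\<in>{N..<t}. 1 / (4 * sqrt (real t))) \<le> (\<Sum>n\<in>{N..<t}. binom_int (2 * n) (int n + d) / 4 ^ n)"
  proof (rule sum_mono)
    fix n assume n: "n \<in> {N..<t}"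
    have "1 \<le> D^2" using assms(2) by simp
    then have n_pos: "1 \<le> n" using n N_def by simp
    have "real ((2 * n) choose n) / 2 \<le> binom_int (2 * n) (int n + d)"
      using binom_int_near_central_ge[OF assms(1), of n] n by (simp add: N_def)
    then have "real ((2 * n) choose n) / 2 / 4 ^ n \<le> binom_int (2 * n) (int n + d) / 4 ^ n"
      by (rule divide_right_mono) simp
    then have "central_binom_prob n / 2 \<le> binom_int (2 * n) (int n + d) / 4 ^ n"
      by (simp add: central_binom_prob_def)
    moreover have "1 / (2 * sqrt (real n)) \<le> central_binom_prob n"
      using n_pos by (rule central_binom_prob_ge)
    moreover have "1 / (2 * sqrt (real t)) \<le> 1 / (2 * sqrt (real n))"
      using n n_pos by (simp add: frac_le)
    ultimately show "1 / (4 * sqrt (real t)) \<le> binom_int (2 * n) (int n + d) / 4 ^ n"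
      by simp
  qed
  also have "\<dots> \<le> (\<Sum>n<t. binom_int (2 * n) (int n + d) / 4 ^ n)"
    by (rule sum_mono2) (auto simp: binom_int_nonneg)
  finally have "real (t - N) / (4 * sqrt (real t)) \<le> (\<Sum>n<t. binom_int (2 * n) (int n + d) / 4 ^ n)"
    by simp
  moreover have "sqrt (real t) / 8 \<le> real (t - N) / (4 * sqrt (real t))"
  proof (cases "t = 0")
    case False
    have "2 * N \<le> t" using assms(3) N_def by simp
    then have "real t / 2 \<le> real (t - N)" by (simp add: of_nat_diff)
    then have "(real t / 2) / (4 * sqrt (real t)) \<le> real (t - N) / (4 * sqrt (real t))"
      by (rule divide_right_mono) simp
    moreover have "(real t / 2) / (4 * sqrt (real t)) = sqrt (real t) / 8"
      using False by (simp add: field_simps)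
    ultimately show ?thesis by simp
  qed simp
  ultimately show ?thesis unfolding broadcast_cov_def by simp
qed

definition square_integrable :: "'a measure \<Rightarrow> ('a \<Rightarrow> real) \<Rightarrow> bool" where
  "square_integrable M f \<longleftrightarrow> f \<in> borel_measurable M \<and> integrable M (\<lambda>x. (f x)^2)"

lemma (in finite_measure) square_integrable_integrable:
  "square_integrable M f \<Longrightarrow> integrable M f"
  unfolding square_integrable_def by (blast intro: square_integrable_imp_integrable)

lemma integrable_mult_square_integrable:
  assumes "square_integrable M f" "square_integrable M g"
  shows "integrable M (\<lambda>x. f x * g x)"
proof (rule Bochner_Integration.integrable_bound)
  show "integrable M (\<lambda>x. (f x)^2 + (g x)^2)" "(\<lambda>x. f x * g x) \<in> borel_measurable M"
    using assms by (simp_all add: square_integrable_def borel_measurable_times)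
  have "\<bar>f x * g x\<bar> \<le> 2 * \<bar>f x\<bar> * \<bar>g x\<bar>" for x
    by (simp add: abs_mult)
  also have "\<dots> x \<le> (f x)^2 + (g x)^2" for x
    using sum_squares_bound[of "\<bar>f x\<bar>" "\<bar>g x\<bar>"] by simp
  finally show "AE x in M. norm (f x * g x) \<le> norm ((f x)^2 + (g x)^2)"
    by simp
qed

lemma square_integrable_add:
  assumes "square_integrable M f" "square_integrable M g"
  shows "square_integrable M (\<lambda>x. f x + g x)"
proof -
  have "(\<lambda>x. (f x + g x)^2) = (\<lambda>x. (f x)^2 + 2 * (f x * g x) + (g x)^2)"
    by (simp add: power2_eq_square algebra_simps)
  with assms integrable_mult_square_integrable[OF assms] show ?thesis
    unfolding square_integrable_def by auto
qed

lemma square_integrable_cmult: "square_integrable M f \<Longrightarrow> square_integrable M (\<lambda>x. c * f x)"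
  unfolding square_integrable_def by (auto simp: power_mult_distrib)

lemma integral_half_sum_mult:
  assumes "square_integrable M f1" "square_integrable M f2" "square_integrable M f3"
    "square_integrable M f4" "square_integrable M g"
  shows "(\<integral>\<omega>. (1/2) * ((f1 \<omega> + f2 \<omega>) + (f3 \<omega> + f4 \<omega>)) * g \<omega> \<partial>M) =
    (1/2) * ((\<integral>\<omega>. f1 \<omega> * g \<omega> \<partial>M) + (\<integral>\<omega>. f2 \<omega> * g \<omega> \<partial>M)
      + (\<integral>\<omega>. f3 \<omega> * g \<omega> \<partial>M) + (\<integral>\<omega>. f4 \<omega> * g \<omega> \<partial>M))"
proof -
  have "(\<lambda>\<omega>. (1/2) * ((f1 \<omega> + f2 \<omega>) + (f3 \<omega> + f4 \<omega>)) * g \<omega>) =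
      (\<lambda>\<omega>. (1/2) * (((f1 \<omega> * g \<omega> + f2 \<omega> * g \<omega>) + f3 \<omega> * g \<omega>) + f4 \<omega> * g \<omega>))"
    by (rule ext) (simp add: algebra_simps)
  with assms show ?thesis by (simp add: integrable_mult_square_integrable)
qed

section \<open>The Gaussian broadcast model on \<open>HS\<^sub>2\<close>\<close>

lemma None_in_HS2_noise_index: "None \<in> HS2_noise_index"
  by (simp add: HS2_noise_index_def)

lemma Some_in_HS2_noise_index: "1 \<le> a + b \<Longrightarrow> Some ((a, b), c) \<in> HS2_noise_index"
  by (auto simp: HS2_noise_index_def)

locale HS2_broadcast =
  fixes M :: "'s measure"
    and Z :: "((int \<times> int) \<times> bool) option \<Rightarrow> 's \<Rightarrow> real"
    and X :: "int \<times> int \<Rightarrow> 's \<Rightarrow> real"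
  assumes model: "gaussian_broadcast_HS2 M Z X"
begin

sublocale prob_space M
  using model by (simp add: gaussian_broadcast_HS2_def)

lemma noise_distributed: "k \<in> HS2_noise_index \<Longrightarrow> distributed M lborel (Z k) std_normal_density"
  using model by (simp add: gaussian_broadcast_HS2_def)

lemma noise_square_integrable: "k \<in> HS2_noise_index \<Longrightarrow> square_integrable M (Z k)"
  using distributed_measurable[OF noise_distributed, of k]
    distributed_integrable[OF noise_distributed, of k "\<lambda>x. x^2"] integrable_std_normal_moment[of 2]
  by (simp add: square_integrable_def)

lemma noise_mean: "k \<in> HS2_noise_index \<Longrightarrow> (\<integral>x. Z k x \<partial>M) = 0"
  using standard_normal_distributed_expectation[OF noise_distributed] by simp

lemma noise_second_moment: "k \<in> HS2_noise_index \<Longrightarrow> (\<integral>x. (Z k x)^2 \<partial>M) = 1"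
  using distributed_integral[OF noise_distributed, of k "\<lambda>x. x^2"] integral_std_normal_moment_even[of 1]
  by simp

lemma noise_inner:
  assumes k: "k \<in> HS2_noise_index" and l: "l \<in> HS2_noise_index"
  shows "(\<integral>x. Z k x * Z l x \<partial>M) = (if k = l then 1 else 0)"
proof (cases "k = l")
  case True
  with noise_second_moment[OF k] show ?thesis by (simp add: power2_eq_square)
next
  case False
  have "indep_vars (\<lambda>_. borel) Z HS2_noise_index"
    using model by (simp add: gaussian_broadcast_HS2_def)
  then have "indep_vars (\<lambda>_. borel) Z {k, l}"
    by (rule indep_vars_subset) (use k l in auto)
  moreover have "integrable M (Z i)" if "i \<in> {k, l}" for i
    using that k l by (auto intro!: square_integrable_integrable noise_square_integrable)
  ultimately have "(\<integral>x. (\<Prod>i\<in>{k, l}. Z i x) \<partial>M) = (\<Prod>i\<in>{k, l}. \<integral>x. Z i x \<partial>M)"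
    by (intro indep_vars_lebesgue_integral) auto
  with False noise_mean[OF k] show ?thesis by simp
qed

lemma X_rank_0: "a + b = 0 \<Longrightarrow> X (a, b) = Z None"
  using model by (simp add: gaussian_broadcast_HS2_def)

lemma X_rank_Suc: "a + b = int (Suc t) \<Longrightarrow> X (a, b) = (\<lambda>\<omega>. (1/2) *
    ((X (a - 1, b) \<omega> + Z (Some ((a, b), True)) \<omega>) + (X (a, b - 1) \<omega> + Z (Some ((a, b), False)) \<omega>)))"
  using model by (auto simp: gaussian_broadcast_HS2_def)

lemma X_square_integrable: "a + b = int t \<Longrightarrow> square_integrable M (X (a, b))"
proof (induction t arbitrary: a b)
  case 0
  then show ?case by (simp add: X_rank_0 noise_square_integrable None_in_HS2_noise_index)
next
  case (Suc t)
  have ranks: "a - 1 + b = int t" "a + (b - 1) = int t" "1 \<le> a + b"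
    using Suc.prems by simp_all
  show ?case
    unfolding X_rank_Suc[OF Suc.prems]
    by (intro square_integrable_cmult square_integrable_add noise_square_integrable Suc.IH
        Some_in_HS2_noise_index ranks)
qed

lemma integral_X_rank_Suc_mult:
  assumes v: "a + b = int (Suc t)" and g: "square_integrable M g"
  shows "(\<integral>\<omega>. X (a, b) \<omega> * g \<omega> \<partial>M) =
    (1/2) * ((\<integral>\<omega>. X (a - 1, b) \<omega> * g \<omega> \<partial>M) + (\<integral>\<omega>. Z (Some ((a, b), True)) \<omega> * g \<omega> \<partial>M)
      + (\<integral>\<omega>. X (a, b - 1) \<omega> * g \<omega> \<partial>M) + (\<integral>\<omega>. Z (Some ((a, b), False)) \<omega> * g \<omega> \<partial>M))"
proof -
  have "a - 1 + b = int t" "a + (b - 1) = int t"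
    using v by simp_all
  then have pred: "square_integrable M (X (a - 1, b))" "square_integrable M (X (a, b - 1))"
    by (simp_all only: X_square_integrable)
  have noise: "square_integrable M (Z (Some ((a, b), c)))" for c
    using v by (intro noise_square_integrable Some_in_HS2_noise_index) simp
  show ?thesis
    unfolding X_rank_Suc[OF v] by (rule integral_half_sum_mult; fact pred noise g)
qed

lemma integral_mult_X_rank_Suc:
  assumes "a + b = int (Suc t)" "square_integrable M g"
  shows "(\<integral>\<omega>. g \<omega> * X (a, b) \<omega> \<partial>M) =
    (1/2) * ((\<integral>\<omega>. g \<omega> * X (a - 1, b) \<omega> \<partial>M) + (\<integral>\<omega>. g \<omega> * Z (Some ((a, b), True)) \<omega> \<partial>M)
      + (\<integral>\<omega>. g \<omega> * X (a, b - 1) \<omega> \<partial>M) + (\<integral>\<omega>. g \<omega> * Z (Some ((a, b), False)) \<omega> \<partial>M))"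
  using integral_X_rank_Suc_mult[OF assms] by (simp add: mult.commute)

lemma X_orthogonal_later_noise:
  "a + b = int t \<Longrightarrow> int t < a' + b' \<Longrightarrow> (\<integral>\<omega>. X (a, b) \<omega> * Z (Some ((a', b'), c)) \<omega> \<partial>M) = 0"
proof (induction t arbitrary: a b)
  case 0
  then show ?case
    using noise_inner[OF None_in_HS2_noise_index Some_in_HS2_noise_index] by (simp add: X_rank_0)
next
  case (Suc t)
  have ranks: "a - 1 + b = int t" "a + (b - 1) = int t" and rank_lt: "int t < a' + b'"
    using Suc.prems by simp_all
  have later: "Some ((a', b'), c) \<in> HS2_noise_index"
    using Suc.prems by (intro Some_in_HS2_noise_index) simp
  have "Some ((a, b), c') \<in> HS2_noise_index" "Some ((a, b), c') \<noteq> Some ((a', b'), c)" for c'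
    using Suc.prems by (auto intro: Some_in_HS2_noise_index)
  then have "(\<integral>\<omega>. Z (Some ((a, b), c')) \<omega> * Z (Some ((a', b'), c)) \<omega> \<partial>M) = 0" for c'
    using noise_inner[OF _ later] by simp
  moreover have "(\<integral>\<omega>. X (a - 1, b) \<omega> * Z (Some ((a', b'), c)) \<omega> \<partial>M) = 0"
    "(\<integral>\<omega>. X (a, b - 1) \<omega> * Z (Some ((a', b'), c)) \<omega> \<partial>M) = 0"
    using Suc.IH[OF ranks(1) rank_lt] Suc.IH[OF ranks(2) rank_lt] by simp_all
  ultimately show ?case
    using integral_X_rank_Suc_mult[OF Suc.prems(1) noise_square_integrable[OF later]] by simp
qed

lemma X_mean: "a + b = int t \<Longrightarrow> (\<integral>\<omega>. X (a, b) \<omega> \<partial>M) = 0"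
proof (induction t arbitrary: a b)
  case 0
  then show ?case by (simp add: X_rank_0 noise_mean None_in_HS2_noise_index)
next
  case (Suc t)
  have noise: "Some ((a, b), c) \<in> HS2_noise_index" for c
    using Suc.prems by (intro Some_in_HS2_noise_index) simp
  have ranks: "a - 1 + b = int t" "a + (b - 1) = int t"
    using Suc.prems by simp_all
  have "integrable M (X (a - 1, b))" "integrable M (X (a, b - 1))"
    using ranks by (simp_all only: square_integrable_integrable X_square_integrable)
  moreover have "(\<integral>\<omega>. X (a - 1, b) \<omega> \<partial>M) = 0" "(\<integral>\<omega>. X (a, b - 1) \<omega> \<partial>M) = 0"
    using ranks by (simp_all only: Suc.IH)
  ultimately show ?case
    using noise by (simp add: X_rank_Suc[OF Suc.prems] noise_mean square_integrable_integrable
        noise_square_integrable)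
qed

lemma X_covariance:
  "a + b = int t \<Longrightarrow> a' + b' = int t \<Longrightarrow>
    (\<integral>\<omega>. X (a, b) \<omega> * X (a', b') \<omega> \<partial>M) = broadcast_cov t (a - a')"
proof (induction t arbitrary: a b a' b')
  case 0
  then show ?case
    using noise_second_moment[OF None_in_HS2_noise_index] by (simp add: X_rank_0 broadcast_cov_0 power2_eq_square)
next
  case (Suc t)
  define d where "d = a - a'"
  have ranks: "a - 1 + b = int t" "a + (b - 1) = int t" "a' - 1 + b' = int t" "a' + (b' - 1) = int t"
    and rank_lt: "int t < a + b" "int t < a' + b'"
    using Suc.prems by simp_all
  have noise: "Some ((a, b), c) \<in> HS2_noise_index" "Some ((a', b'), c) \<in> HS2_noise_index" for c
    using Suc.prems by (simp_all add: Some_in_HS2_noise_index)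
  have sq: "square_integrable M (X (a - 1, b))" "square_integrable M (X (a, b - 1))"
    "square_integrable M (X (a', b'))" "square_integrable M (Z (Some ((a, b), c)))" for c
    using X_square_integrable[OF ranks(1)] X_square_integrable[OF ranks(2)]
      X_square_integrable[OF Suc.prems(2)] noise_square_integrable[OF noise(1)] by simp_all
  have XX: "(\<integral>\<omega>. X (a - 1, b) \<omega> * X (a' - 1, b') \<omega> \<partial>M) = broadcast_cov t d"
    "(\<integral>\<omega>. X (a - 1, b) \<omega> * X (a', b' - 1) \<omega> \<partial>M) = broadcast_cov t (d - 1)"
    "(\<integral>\<omega>. X (a, b - 1) \<omega> * X (a' - 1, b') \<omega> \<partial>M) = broadcast_cov t (d + 1)"
    "(\<integral>\<omega>. X (a, b - 1) \<omega> * X (a', b' - 1) \<omega> \<partial>M) = broadcast_cov t d"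
    using Suc.IH[OF ranks(1) ranks(3)] Suc.IH[OF ranks(1) ranks(4)]
      Suc.IH[OF ranks(2) ranks(3)] Suc.IH[OF ranks(2) ranks(4)]
    by (simp_all add: d_def algebra_simps)
  have XZ: "(\<integral>\<omega>. X (a - 1, b) \<omega> * Z (Some ((a', b'), c)) \<omega> \<partial>M) = 0"
    "(\<integral>\<omega>. X (a, b - 1) \<omega> * Z (Some ((a', b'), c)) \<omega> \<partial>M) = 0"
    "(\<integral>\<omega>. Z (Some ((a, b), c)) \<omega> * X (a' - 1, b') \<omega> \<partial>M) = 0"
    "(\<integral>\<omega>. Z (Some ((a, b), c)) \<omega> * X (a', b' - 1) \<omega> \<partial>M) = 0" for c
    using X_orthogonal_later_noise[OF ranks(1) rank_lt(2)] X_orthogonal_later_noise[OF ranks(2) rank_lt(2)]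
      X_orthogonal_later_noise[OF ranks(3) rank_lt(1)] X_orthogonal_later_noise[OF ranks(4) rank_lt(1)]
    by (simp_all add: mult.commute)
  have "(a, b) = (a', b') \<longleftrightarrow> d = 0"
    using Suc.prems by (auto simp: d_def)
  then have ZZ: "(\<integral>\<omega>. Z (Some ((a, b), c)) \<omega> * Z (Some ((a', b'), c')) \<omega> \<partial>M) =
      (if d = 0 \<and> c = c' then 1 else 0)" for c c'
    using noise_inner[OF noise(1) noise(2)] by auto
  have "(\<integral>\<omega>. X (a, b) \<omega> * X (a', b') \<omega> \<partial>M) =
    (1/2) * ((\<integral>\<omega>. X (a - 1, b) \<omega> * X (a', b') \<omega> \<partial>M) + (\<integral>\<omega>. Z (Some ((a, b), True)) \<omega> * X (a', b') \<omega> \<partial>M)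
      + (\<integral>\<omega>. X (a, b - 1) \<omega> * X (a', b') \<omega> \<partial>M) + (\<integral>\<omega>. Z (Some ((a, b), False)) \<omega> * X (a', b') \<omega> \<partial>M))"
    by (rule integral_X_rank_Suc_mult[OF Suc.prems(1) sq(3)])
  also have "\<dots> = (broadcast_cov t (d - 1) + 2 * broadcast_cov t d + broadcast_cov t (d + 1)) / 4
      + (if d = 0 then 1/2 else 0)"
    unfolding integral_mult_X_rank_Suc[OF Suc.prems(2) sq(1)] integral_mult_X_rank_Suc[OF Suc.prems(2) sq(2)]
      integral_mult_X_rank_Suc[OF Suc.prems(2) sq(4)]
    by (simp only: XX XZ ZZ) (simp add: field_simps)
  also have "\<dots> = broadcast_cov (Suc t) (a - a')"
    by (simp add: broadcast_cov_Suc d_def)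
  finally show ?case .
qed

end

theorem lemmal:
  fixes M :: "'s measure"
    and Z :: "((int \<times> int) \<times> bool) option \<Rightarrow> 's \<Rightarrow> real"
    and X :: "int \<times> int \<Rightarrow> 's \<Rightarrow> real"
    and m t :: nat and i j :: int
  assumes model: "gaussian_broadcast_HS2 M Z X"
    and m_ge: "m \<ge> 2^5"
    and t_ge: "t \<ge> 2^11 * m^3"
    and ij: "\<bar>i - j\<bar> \<le> 2 * int m"
  shows "sqrt (real t) \<ge> prob_space.variance M (X (i, int t - i))
       \<and> prob_space.variance M (X (i, int t - i)) \<ge> covariance M (X (i, int t - i)) (X (j, int t - j))
       \<and> covariance M (X (i, int t - i)) (X (j, int t - j)) \<ge> sqrt (real t) / 50"
proof -
  interpret HS2_broadcast M Z X
    by (rule HS2_broadcast.intro) (fact model)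
  have ranks: "i + (int t - i) = int t" "j + (int t - j) = int t"
    by simp_all
  have var: "variance (X (i, int t - i)) = broadcast_cov t 0"
    using X_covariance[OF ranks(1) ranks(1)] X_mean[OF ranks(1)] by (simp add: power2_eq_square)
  have cov: "covariance M (X (i, int t - i)) (X (j, int t - j)) = broadcast_cov t (i - j)"
    using X_covariance[OF ranks] X_mean[OF ranks(1)] X_mean[OF ranks(2)] by (simp add: covariance_def)
  have "1 \<le> m ^ 2" "m ^ 2 \<le> m ^ 3"
    using m_ge by (simp_all add: power_increasing)
  then have t_large: "8 * (2 * m) ^ 2 \<le> t" "16 \<le> t"
    using t_ge by (simp_all add: power_mult_distrib)
  have "sqrt (real t) / 16 \<le> broadcast_cov t (i - j)"
    using ij m_ge t_large(1) by (intro broadcast_cov_ge[of _ "2 * m"]) simp_all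
  then show ?thesis
    using var cov broadcast_cov_diag_le[OF t_large(2)] broadcast_cov_le_diag[of t "i - j"] by simp
qed

end
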